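(* Let $\lambda\in\Lambda$ and let $D$ be a ball contained in $K(Q_\lambda,B)$. Then (1) all points of $D$ have the same itinerary for $Q_\lambda$; (2) if this common itinerary is not pre-periodic under the one-sided shift, then $D$ is a wandering disc for $Q_\lambda$ which is not attracted to an attracting periodic orbit.
   Context: Let $p$ be a prime, $\mathbb C_p$ with $p$-adic absolute value, $|p|=1/p$. $\Lambda=\{\lambda\in\mathbb C_p:|\lambda-1|<1\}$, $P_\lambda(z)=\frac{\lambda}{p}z^p+\left(1-\frac{\lambda}{p}\right)z^{p+1}$, $\rho=p^{-1/(p-1)}$. Fix $\hat r\in|\mathbb C_p^*|$, $\hat r>1$, $B=\{z:|z|\le\hat r\}$; $\mathcal H(B)$ is the ring of power series $\sum a_iz^i$ convergent on $B$ with norm $\|f\|_B=\sup_i|a_i|\hat r^{\,i}$. Fix $Q\in\mathcal H(B)$ with $\|Q\|_B<\rho$, $Q^*_\lambda=P_\lambda+Q$, and let $h(\lambda)$ be the unique fixed point of $Q^*_\lambda$ in $\{z:|z-1|\le|Q(1)|/p\}$. Define $Q_\lambda(z)=P_\lambda(z+h(\lambda)-1)+Q(z+h(\lambda)-1)+1-h(\lambda)$ for $z\in B$, and $K(Q_\lambda,B)=\{z\in B:Q_\lambda^n(z)\in B\ \forall n\ge0\}$. Let $B_0=\{z:|z|<1\}$, $B_1=\{z:|z-1|<1\}$; one has $K(Q_\lambda,B)\subset B_0\sqcup B_1$. The itinerary of $z\in K(Q_\lambda,B)$ is the sequence $\theta_0\theta_1\theta_2\ldots\in\{0,1\}^{\mathbb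 N\cup\{0\}}$ with $Q_\lambda^n(z)\in B_{\theta_n}$ for all $n\ge0$. $D$ is a wandering disc if $Q_\lambda^n(D)\cap Q_\lambda^m(D)\neq\emptyset$ only when $n=m$; it is not attracted to an attracting periodic orbit if no point of $D$ lies in an open ball contained in the basin of attraction of an attracting periodic point $z_0$ (of period $k$, with $|(Q_\lambda^k)'(z_0)|<1$). *)

theory Defs
  imports "HOL-Computational_Algebra.Computational_Algebra"
begin

text \<open>The field C_p is modelled abstractly: a field of characteristic 0 together with an
absolute value av satisfying the properties which characterise C_p up to isometric
isomorphism.\<close>

definition conv_to :: "('a::field \<Rightarrow> real) \<Rightarrow> (nat \<Rightarrow> 'a) \<Rightarrow> 'a \<Rightarrow> bool" where
  "conv_to av s L \<longleftrightarrow> (\<forall>e>0. \<exists>N. \<forall>n\<ge>N. av (s n - L) < e)"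

definition cauchy_av :: "('a::field \<Rightarrow> real) \<Rightarrow> (nat \<Rightarrow> 'a) \<Rightarrow> bool" where
  "cauchy_av av s \<longleftrightarrow> (\<forall>e>0. \<exists>N. \<forall>m\<ge>N. \<forall>n\<ge>N. av (s m - s n) < e)"

definition is_Cp :: "('a::field_char_0 \<Rightarrow> real) \<Rightarrow> nat \<Rightarrow> bool" where
  "is_Cp av p \<longleftrightarrow> prime p
     \<and> (\<forall>x. 0 \<le> av x) \<and> (\<forall>x. av x = 0 \<longleftrightarrow> x = 0)
     \<and> (\<forall>x y. av (x * y) = av x * av y)
     \<and> (\<forall>x y. av (x + y) \<le> max (av x) (av y))
     \<and> av (of_nat p) = 1 / real p
     \<and> (\<forall>s. cauchy_av av s \<longrightarrow> (\<exists>L. conv_to av s L))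
     \<and> (\<forall>f :: 'a poly. 0 < degree f \<longrightarrow> (\<exists>x. poly f x = 0))
     \<and> (\<forall>x e. 0 < e \<longrightarrow> (\<exists>y. av (x - y) < e \<and>
            (\<exists>f :: int poly. f \<noteq> 0 \<and> poly (map_poly of_int f) y = 0)))"

definition ps_eval :: "('a::field \<Rightarrow> real) \<Rightarrow> (nat \<Rightarrow> 'a) \<Rightarrow> 'a \<Rightarrow> 'a" where
  "ps_eval av a z = (THE L. conv_to av (\<lambda>n. \<Sum>i<n. a i * z ^ i) L)"

definition closed_disc :: "('a::field \<Rightarrow> real) \<Rightarrow> real \<Rightarrow> 'a set" where
  "closed_disc av r = {z. av z \<le> r}"

definition in_H :: "('a::field \<Rightarrow> real) \<Rightarrow> real \<Rightarrow> (nat \<Rightarrow> 'a) \<Rightarrow> bool" where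
  "in_H av rh a \<longleftrightarrow> (\<forall>z \<in> closed_disc av rh. \<exists>L. conv_to av (\<lambda>n. \<Sum>i<n. a i * z ^ i) L)"

definition Bnorm :: "('a::field \<Rightarrow> real) \<Rightarrow> real \<Rightarrow> (nat \<Rightarrow> 'a) \<Rightarrow> real" where
  "Bnorm av rh a = (SUP i. av (a i) * rh ^ i)"

definition rho :: "nat \<Rightarrow> real" where
  "rho p = real p powr (- 1 / (real p - 1))"

definition Pmap :: "nat \<Rightarrow> 'a::field \<Rightarrow> 'a \<Rightarrow> 'a" where
  "Pmap p lam z = lam / of_nat p * z ^ p + (1 - lam / of_nat p) * z ^ (p + 1)"

definition Qstar :: "('a::field \<Rightarrow> real) \<Rightarrow> (nat \<Rightarrow> 'a) \<Rightarrow> nat \<Rightarrow> 'a \<Rightarrow> 'a \<Rightarrow> 'a" where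
  "Qstar av q p lam z = Pmap p lam z + ps_eval av q z"

definition hfix :: "('a::field \<Rightarrow> real) \<Rightarrow> (nat \<Rightarrow> 'a) \<Rightarrow> nat \<Rightarrow> 'a \<Rightarrow> 'a" where
  "hfix av q p lam = (THE w. av (w - 1) \<le> av (ps_eval av q 1) / real p \<and> Qstar av q p lam w = w)"

definition Qlam :: "('a::field \<Rightarrow> real) \<Rightarrow> (nat \<Rightarrow> 'a) \<Rightarrow> nat \<Rightarrow> 'a \<Rightarrow> 'a \<Rightarrow> 'a" where
  "Qlam av q p lam z = (let h = hfix av q p lam in
     Pmap p lam (z + h - 1) + ps_eval av q (z + h - 1) + 1 - h)"

definition Kset :: "('a::field \<Rightarrow> real) \<Rightarrow> real \<Rightarrow> ('a \<Rightarrow> 'a) \<Rightarrow> 'a set" where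
  "Kset av rh f = {z \<in> closed_disc av rh. \<forall>n. (f ^^ n) z \<in> closed_disc av rh}"

definition open_ball :: "('a::field \<Rightarrow> real) \<Rightarrow> 'a \<Rightarrow> real \<Rightarrow> 'a set" where
  "open_ball av c r = {z. av (z - c) < r}"

definition is_ball :: "('a::field \<Rightarrow> real) \<Rightarrow> 'a set \<Rightarrow> bool" where
  "is_ball av D \<longleftrightarrow> (\<exists>c r. 0 < r \<and> (D = {z. av (z - c) < r} \<or> D = {z. av (z - c) \<le> r}))"

definition itinerary :: "('a::field \<Rightarrow> real) \<Rightarrow> ('a \<Rightarrow> 'a) \<Rightarrow> 'a \<Rightarrow> (nat \<Rightarrow> nat) \<Rightarrow> bool" where
  "itinerary av f z \<theta> \<longleftrightarrow> (\<forall>n. (\<theta> n = 0 \<and> av ((f ^^ n) z) < 1) \<or> (\<theta> n = 1 \<and> av ((f ^^ n) z - 1) < 1))"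

definition preperiodic_seq :: "(nat \<Rightarrow> nat) \<Rightarrow> bool" where
  "preperiodic_seq \<theta> \<longleftrightarrow> (\<exists>N k. 0 < k \<and> (\<forall>n\<ge>N. \<theta> (n + k) = \<theta> n))"

definition wandering :: "('a \<Rightarrow> 'a) \<Rightarrow> 'a set \<Rightarrow> bool" where
  "wandering f D \<longleftrightarrow> (\<forall>n m. (f ^^ n) ` D \<inter> (f ^^ m) ` D \<noteq> {} \<longrightarrow> n = m)"

definition has_deriv_av :: "('a::field \<Rightarrow> real) \<Rightarrow> ('a \<Rightarrow> 'a) \<Rightarrow> 'a \<Rightarrow> 'a \<Rightarrow> bool" where
  "has_deriv_av av g z0 c \<longleftrightarrow> (\<forall>e>0. \<exists>d>0. \<forall>w. 0 < av (w - z0) \<and> av (w - z0) < d \<longrightarrow>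
      av ((g w - g z0) / (w - z0) - c) < e)"

definition attracting_periodic :: "('a::field \<Rightarrow> real) \<Rightarrow> real \<Rightarrow> ('a \<Rightarrow> 'a) \<Rightarrow> 'a \<Rightarrow> nat \<Rightarrow> bool" where
  "attracting_periodic av rh f z0 k \<longleftrightarrow> 0 < k \<and> z0 \<in> Kset av rh f \<and> (f ^^ k) z0 = z0
     \<and> (\<forall>j. 0 < j \<and> j < k \<longrightarrow> (f ^^ j) z0 \<noteq> z0)
     \<and> (\<exists>c. has_deriv_av av (f ^^ k) z0 c \<and> av c < 1)"

definition basin :: "('a::field \<Rightarrow> real) \<Rightarrow> real \<Rightarrow> ('a \<Rightarrow> 'a) \<Rightarrow> 'a \<Rightarrow> nat \<Rightarrow> 'a set" where
  "basin av rh f z0 k = {z \<in> Kset av rh f. \<exists>m. conv_to av (\<lambda>n. (f ^^ (n * k + m)) z) z0}"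

definition attracted :: "('a::field \<Rightarrow> real) \<Rightarrow> real \<Rightarrow> ('a \<Rightarrow> 'a) \<Rightarrow> 'a set \<Rightarrow> bool" where
  "attracted av rh f D \<longleftrightarrow> (\<exists>z\<in>D. \<exists>z0 k c r. attracting_periodic av rh f z0 k \<and> 0 < r \<and>
      z \<in> open_ball av c r \<and> open_ball av c r \<subseteq> basin av rh f z0 k)"

end

theory Submission
  imports Defs
begin

text \<open>
  Write \<open>\<delta> = h(\<lambda>) - 1\<close>, so that \<open>Q\<^sub>\<lambda> z = Q\<^sup>*\<^sub>\<lambda>(z + \<delta>) - \<delta>\<close>; the fixed point \<open>h(\<lambda>)\<close> exists and
  satisfies \<open>|\<delta>| < 1\<close> because \<open>z \<mapsto> z - (Q\<^sup>*\<^sub>\<lambda> z - z)/\<beta>\<close>, \<open>\<beta> = p - \<lambda>/p\<close>, is a \<open>1/p\<close>-contraction of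
  \<open>|z - 1| \<le> |Q(1)|/p\<close>. Points with \<open>|z| > 1\<close> are pushed outwards by the factor \<open>p\<close>, and points with
  \<open>|z| = |z - 1| = 1\<close> are mapped to modulus \<open>p\<close>; hence \<open>K(Q\<^sub>\<lambda>, B) \<subseteq> B\<^sub>0 \<union> B\<^sub>1\<close>.

  (1) For \<open>z, w\<close> in the ball \<open>D\<close>, the map \<open>s \<mapsto> Q\<^sub>\<lambda>\<^sup>n(z + s (w - z))\<close> on the closed unit disc takes values
  in \<open>B\<^sub>0 \<union> B\<^sub>1\<close>, and it is uniformly 1-close to a polynomial: iterate a truncation of the power series,
  whose error is amplified at most by the Lipschitz constant \<open>p\<close> per step. Over an algebraically closed
  field, if some non-constant coefficient of the polynomial has absolute value \<open>R \<ge> 1\<close>, the image of the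
  unit disc contains an open disc of radius \<open>R\<close> disjoint from \<open>B\<^sub>0 \<union> B\<^sub>1\<close>, which is impossible;
  otherwise the polynomial moves points by less than 1. So \<open>z\<close> and \<open>w\<close> always lie in the same piece.

  (2) If \<open>Q\<^sub>\<lambda>\<^sup>n(D)\<close> meets \<open>Q\<^sub>\<lambda>\<^sup>m(D)\<close> with \<open>n \<noteq> m\<close>, the itinerary is shift-invariant from \<open>n\<close> to \<open>m\<close>,
  hence pre-periodic. A point attracted to a cycle of period \<open>k\<close> eventually follows the cycle so
  closely that, by the Lipschitz bound, its itinerary becomes \<open>k\<close>-periodic.
\<close>

section \<open>Orbits and itineraries\<close>

lemma funpow_add_apply: "(f ^^ (m + n)) x = (f ^^ n) ((f ^^ m) x)"
  by (simp add: funpow_add add.commute[of m n])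

lemma Kset_funpow: "z \<in> Kset av rh f \<Longrightarrow> (f ^^ n) z \<in> Kset av rh f"
  unfolding Kset_def by (auto simp flip: funpow_add_apply)

lemma preperiodic_seqI:
  assumes "a < b" "\<And>j. \<theta> (a + j) = \<theta> (b + j)"
  shows "preperiodic_seq \<theta>"
  unfolding preperiodic_seq_def
proof (rule exI[of _ a], rule exI[of _ "b - a"], intro conjI allI impI)
  fix n assume "a \<le> n"
  then have "n + (b - a) = b + (n - a)" "n = a + (n - a)" using \<open>a < b\<close> by simp_all
  then show "\<theta> (n + (b - a)) = \<theta> n" using assms(2)[of "n - a"] by metis
qed (use \<open>a < b\<close> in simp)

lemma preperiodic_seqI_blocks:
  assumes "0 < k" and blocks: "\<And>n j. N \<le> n \<Longrightarrow> j < k \<Longrightarrow> \<theta> (n * k + m + j) = g j"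
  shows "preperiodic_seq \<theta>"
  unfolding preperiodic_seq_def
proof (intro exI conjI allI impI)
  fix i assume i: "N * k + m \<le> i"
  define n j where "n = (i - m) div k" and "j = (i - m) mod k"
  have n: "N \<le> n" using i \<open>0 < k\<close> by (simp add: n_def less_eq_div_iff_mult_less_eq)
  have j: "j < k" using \<open>0 < k\<close> by (simp add: j_def)
  have i_eq: "i = n * k + m + j" and ik_eq: "i + k = (n + 1) * k + m + j"
    using i by (simp_all add: n_def j_def)
  have "\<theta> (i + k) = g j" unfolding ik_eq using n j by (intro blocks) auto
  moreover have "\<theta> i = g j" unfolding i_eq using n j by (intro blocks) auto
  ultimately show "\<theta> (i + k) = \<theta> i" by simp
qed (rule \<open>0 < k\<close>)

lemma wandering_if_not_preperiodic:
  assumes labels: "\<And>z n. z \<in> D \<Longrightarrow> \<theta> n = lab ((f ^^ n) z)" and "\<not> preperiodic_seq \<theta>"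
  shows "wandering f D"
  unfolding wandering_def
proof (intro allI impI)
  fix n m assume "(f ^^ n) ` D \<inter> (f ^^ m) ` D \<noteq> {}"
  then obtain z w where "z \<in> D" "w \<in> D" and meet: "(f ^^ n) z = (f ^^ m) w" by blast
  then have "\<theta> (n + j) = \<theta> (m + j)" for j
    using labels[OF \<open>z \<in> D\<close>, of "n + j"] labels[OF \<open>w \<in> D\<close>, of "m + j"] meet
    by (simp add: funpow_add_apply)
  then show "n = m"
    using preperiodic_seqI[of n m \<theta>] preperiodic_seqI[of m n \<theta>] assms(2) by fastforce
qed

section \<open>Non-archimedean absolute values\<close>

locale nonarch_abs =
  fixes av :: "'a::field \<Rightarrow> real"
  assumes av_nonneg [simp]: "0 \<le> av x"
    and av_eq_0_iff [simp]: "av x = 0 \<longleftrightarrow> x = 0"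
    and av_mult: "av (x * y) = av x * av y"
    and av_ultra: "av (x + y) \<le> max (av x) (av y)"
begin

lemma av_0 [simp]: "av 0 = 0"
  by simp

lemma av_pos: "x \<noteq> 0 \<Longrightarrow> 0 < av x"
  using av_nonneg[of x] av_eq_0_iff[of x] by linarith

lemma av_1 [simp]: "av 1 = 1"
proof -
  have "av 1 = av 1 * av 1" using av_mult[of 1 1] by simp
  then show ?thesis by (metis av_eq_0_iff mult_cancel_left1 zero_neq_one)
qed

lemma av_minus [simp]: "av (- x) = av x"
proof -
  have "av (-1) * av (-1) = 1" using av_mult[of "-1" "-1"] by simp
  then have "av (-1 :: 'a) = 1"
    using av_nonneg[of "-1"] by (auto simp: square_eq_1_iff)
  then show ?thesis using av_mult[of "-1" x] by simp
qed

lemma av_minus_commute: "av (x - y) = av (y - x)"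
  by (metis av_minus minus_diff_eq)

lemma av_diff_le: "av (x - y) \<le> max (av x) (av y)"
  using av_ultra[of x "- y"] by simp

lemma av_triangle: "av (x - z) \<le> max (av (x - y)) (av (y - z))"
  using av_ultra[of "x - y" "y - z"] by simp

lemma av_add_bounded: "av x \<le> M \<Longrightarrow> av y \<le> M \<Longrightarrow> av (x + y) \<le> M"
  by (rule order_trans[OF av_ultra]) simp

lemma av_diff_bounded: "av x \<le> M \<Longrightarrow> av y \<le> M \<Longrightarrow> av (x - y) \<le> M"
  by (rule order_trans[OF av_diff_le]) simp

lemma av_diff_bounded_less: "av x < M \<Longrightarrow> av y < M \<Longrightarrow> av (x - y) < M"
  by (rule le_less_trans[OF av_diff_le]) simp

lemma av_power: "av (x ^ n) = av x ^ n"
  by (induction n) (auto simp: av_mult)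

lemma av_divide: "av (x / y) = av x / av y"
proof (cases "y = 0")
  case False
  then have "av y * av (inverse y) = 1" using av_mult[of y "inverse y"] by simp
  then show ?thesis by (simp add: divide_inverse av_mult inverse_unique)
qed simp

lemma av_add_dominant: assumes "av y < av x" shows "av (x + y) = av x"
proof -
  have "av x \<le> max (av (x + y)) (av (- y))" using av_ultra[of "x + y" "- y"] by simp
  with assms av_ultra[of x y] show ?thesis by auto
qed

lemma av_diff_dominant: "av y < av x \<Longrightarrow> av (x - y) = av x"
  using av_add_dominant[of "- y" x] by simp

lemma av_of_nat_le_1: "av (of_nat n) \<le> 1"
proof (induction n)
  case (Suc n)
  then show ?case using av_ultra[of 1 "of_nat n"] by simp
qed simp

lemma av_sum_le:
  assumes "\<And>i. i \<in> A \<Longrightarrow> av (g i) \<le> M" "0 \<le> M"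
  shows "av (sum g A) \<le> M"
  using assms
proof (induction A rule: infinite_finite_induct)
  case (insert x F)
  then have "av (g x) \<le> M" "av (sum g F) \<le> M" by auto
  then show ?case using av_ultra[of "g x" "sum g F"] insert(1,2) by simp
qed simp_all

lemma av_sum_less:
  assumes "\<And>i. i \<in> A \<Longrightarrow> av (g i) < M" "0 < M"
  shows "av (sum g A) < M"
  using assms
proof (induction A rule: infinite_finite_induct)
  case (insert x F)
  then have "av (g x) < M" "av (sum g F) < M" by auto
  then show ?case using av_ultra[of "g x" "sum g F"] insert(1,2) by simp
qed simp_all

lemma av_power_diff_le:
  assumes "av x \<le> r" "av y \<le> r"
  shows "av (x ^ Suc n - y ^ Suc n) \<le> av (x - y) * r ^ n"
proof -
  have "av (\<Sum>i<Suc n. y ^ (n - i) * x ^ i) \<le> r ^ n"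
  proof (rule av_sum_le)
    fix i assume "i \<in> {..<Suc n}"
    then have "r ^ (n - i) * r ^ i = r ^ n" by (simp flip: power_add)
    moreover have "av y ^ (n - i) * av x ^ i \<le> r ^ (n - i) * r ^ i"
      using assms order_trans[OF av_nonneg assms(1)]
      by (intro mult_mono power_mono) auto
    ultimately show "av (y ^ (n - i) * x ^ i) \<le> r ^ n" by (simp add: av_mult av_power)
  qed (use order_trans[OF av_nonneg assms(1)] in simp)
  then show ?thesis
    unfolding power_diff_sumr2[of x "Suc n" y] av_mult
    by (simp add: mult_left_mono)
qed

lemma av_power_diff_le_1:
  assumes "av x \<le> 1" "av y \<le> 1"
  shows "av (x ^ n - y ^ n) \<le> av (x - y)"
  using av_power_diff_le[OF assms, of "n - 1"] by (cases n) auto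

lemma conv_unique: assumes "conv_to av s L" "conv_to av s L'" shows "L = L'"
proof (rule ccontr)
  assume "L \<noteq> L'"
  then have e: "0 < av (L - L')" by (simp add: av_pos)
  obtain N1 where N1: "\<forall>n\<ge>N1. av (s n - L) < av (L - L')"
    using assms(1) e unfolding conv_to_def by blast
  obtain N2 where N2: "\<forall>n\<ge>N2. av (s n - L') < av (L - L')"
    using assms(2) e unfolding conv_to_def by blast
  define n where "n = max N1 N2"
  have "av (L - s n) < av (L - L')" "av (s n - L') < av (L - L')"
    using N1 N2 av_minus_commute[of L] unfolding n_def by auto
  then show False using av_triangle[of L L' "s n"] by linarith
qed

lemma conv_bound:
  assumes "conv_to av s L" "\<And>n. n \<ge> N \<Longrightarrow> av (s n - C) \<le> M"
  shows "av (L - C) \<le> M"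
proof (rule ccontr)
  assume c: "\<not> av (L - C) \<le> M"
  have "0 \<le> M" using assms(2)[of N] av_nonneg[of "s N - C"] by linarith
  with c have "0 < av (L - C)" by linarith
  then obtain N1 where N1: "\<forall>n\<ge>N1. av (s n - L) < av (L - C)"
    using assms(1) unfolding conv_to_def by blast
  define n where "n = max N N1"
  have "av (L - s n) < av (L - C)" "av (s n - C) \<le> M"
    using N1 assms(2) av_minus_commute[of L] unfolding n_def by auto
  with c show False using av_triangle[of L C "s n"] by linarith
qed

lemma conv_diff:
  assumes "conv_to av s L" "conv_to av t L'"
  shows "conv_to av (\<lambda>n. s n - t n) (L - L')"
  unfolding conv_to_def
proof (intro allI impI)
  fix e :: real assume "0 < e"
  then obtain N1 N2 where N1: "\<forall>n\<ge>N1. av (s n - L) < e" and N2: "\<forall>n\<ge>N2. av (t n - L') < e"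
    using assms unfolding conv_to_def by meson
  have "av (s n - t n - (L - L')) < e" if "max N1 N2 \<le> n" for n
  proof -
    have eq: "s n - t n - (L - L') = (s n - L) - (t n - L')" by simp
    show ?thesis
      unfolding eq using that N1[rule_format, of n] N2[rule_format, of n]
        av_diff_le[of "s n - L" "t n - L'"] by auto
  qed
  then show "\<exists>N. \<forall>n\<ge>N. av (s n - t n - (L - L')) < e" by blast
qed

lemma ps_eval_eqI: "conv_to av (\<lambda>n. \<Sum>i<n. a i * z ^ i) L \<Longrightarrow> ps_eval av a z = L"
  unfolding ps_eval_def using conv_unique by blast

lemma ultra_cauchy:
  assumes step: "\<And>n. av (s (Suc n) - s n) \<le> c ^ n * r" and "0 \<le> c" "c < 1" "0 \<le> r"
  shows "cauchy_av av s"
proof -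
  have tail: "av (s (n + k) - s n) \<le> c ^ n * r" for n k
  proof (induction k)
    case (Suc k)
    have "c ^ (n + k) * r \<le> c ^ n * r"
      using assms by (intro mult_right_mono power_decreasing) auto
    then show ?case
      using av_triangle[of "s (Suc (n + k))" "s n" "s (n + k)"] step[of "n + k"] Suc by simp
  qed (simp add: assms)
  have "\<exists>N. \<forall>m\<ge>N. \<forall>n\<ge>N. av (s m - s n) < e" if "0 < e" for e
  proof -
    obtain N where N: "c ^ N * r < e"
    proof (cases "r = 0")
      case False
      then have "0 < e / r" using assms \<open>0 < e\<close> by simp
      then obtain N where "c ^ N < e / r" using real_arch_pow_inv assms by blast
      then show ?thesis using that False assms by (intro that[of N]) (simp add: pos_less_divide_eq)
    qed (use \<open>0 < e\<close> in auto)
    have "av (s m - s n) < e" if "n \<ge> N" "m \<ge> n" for m n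
    proof -
      have "c ^ n * r \<le> c ^ N * r" using that assms by (intro mult_right_mono power_decreasing) auto
      then show ?thesis using tail[of n "m - n"] that N by simp
    qed
    then show ?thesis by (metis av_minus_commute nle_le order_trans)
  qed
  then show ?thesis unfolding cauchy_av_def by blast
qed

lemma is_ball_nonempty:
  assumes "is_ball av D" obtains c where "c \<in> D"
proof -
  obtain c r where "0 < r" "D = {x. av (x - c) < r} \<or> D = {x. av (x - c) \<le> r}"
    using assms unfolding is_ball_def by blast
  then show thesis using that[of c] by auto
qed

lemma is_ball_segment:
  assumes "is_ball av D" "z \<in> D" "w \<in> D" "av s \<le> 1"
  shows "z + s * (w - z) \<in> D"
proof -
  obtain c r where D: "D = {x. av (x - c) < r} \<or> D = {x. av (x - c) \<le> r}"
    using assms(1) unfolding is_ball_def by blast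
  have "av (s * (w - z)) \<le> av (w - z)"
    using assms(4) by (simp add: av_mult mult_left_le_one_le)
  moreover have "av (w - z) \<le> max (av (w - c)) (av (z - c))"
    using av_triangle[of w z c] av_minus_commute[of c z] by simp
  ultimately have "av ((z - c) + s * (w - z)) \<le> max (av (z - c)) (av (w - c))"
    using av_ultra[of "z - c" "s * (w - z)"] by auto
  then show ?thesis using D assms(2,3) by (auto simp: algebra_simps)
qed

text \<open>The discs \<open>B\<^sub>0\<close> and \<open>B\<^sub>1\<close> are labelled 0 and 1; the label is meaningful only on their union.\<close>
definition piece :: "'a \<Rightarrow> nat" where
  "piece x = (if av x < 1 then 0 else 1)"

lemma piece_eq:
  assumes "av x < 1 \<or> av (x - 1) < 1" "av (x - y) < 1"
  shows "piece y = piece x"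
proof -
  have "av y \<le> max (av (y - x)) (av x)" "av x \<le> max (av (x - y)) (av y)"
    "av (x - 1) \<le> max (av (x - y)) (av (y - 1))"
    using av_ultra[of "y - x" x] av_ultra[of "x - y" y] av_triangle[of x 1 y] by simp_all
  then show ?thesis using assms av_minus_commute[of x y] av_diff_le[of x "x - 1"]
    unfolding piece_def by auto
qed

lemma itinerary_piece:
  assumes "\<And>n. \<theta> n = piece ((f ^^ n) z)" "\<And>n. av ((f ^^ n) z) < 1 \<or> av ((f ^^ n) z - 1) < 1"
  shows "itinerary av f z \<theta>"
  unfolding itinerary_def assms(1) piece_def using assms(2) by auto

lemma funpow_approx:
  assumes orbit: "\<And>j. j < k \<Longrightarrow> av ((f ^^ j) x) \<le> 1"
    and lip: "\<And>u v. av u \<le> 1 \<Longrightarrow> av v \<le> 1 \<Longrightarrow> av (F u - F v) \<le> L * av (u - v)"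
    and approx: "\<And>u. av u \<le> 1 \<Longrightarrow> av (f u - F u) \<le> \<tau>"
    and "av (x - y) \<le> e" "\<tau> \<le> e" "1 \<le> L" "L ^ k * e < 1"
  shows "av ((f ^^ k) x - (F ^^ k) y) \<le> L ^ k * e"
  using orbit \<open>L ^ k * e < 1\<close>
proof (induction k)
  case 0
  then show ?case using assms by simp
next
  case (Suc k)
  define a b where "a = (f ^^ k) x" and "b = (F ^^ k) y"
  have e: "0 \<le> e" using assms(4) av_nonneg order_trans by blast
  have "L ^ k * e \<le> L ^ Suc k * e"
    using e \<open>1 \<le> L\<close> by (intro mult_right_mono power_increasing) auto
  then have ab: "av (a - b) \<le> L ^ k * e" "L ^ k * e < 1"
    using Suc unfolding a_def b_def by auto
  have a: "av a \<le> 1" using Suc.prems(1)[of k] by (simp add: a_def)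
  then have b: "av b \<le> 1"
    using ab av_ultra[of "b - a" a] av_minus_commute[of a b] by simp
  have "av (F a - F b) \<le> L ^ Suc k * e"
    using lip[OF a b] ab \<open>1 \<le> L\<close> by (simp add: order_trans mult_left_mono)
  moreover have "\<tau> \<le> L ^ Suc k * e"
    using \<open>\<tau> \<le> e\<close> mult_right_mono[OF one_le_power[OF \<open>1 \<le> L\<close>, of "Suc k"] e] by simp
  ultimately show ?case
    using approx[OF a] av_triangle[of "f a" "F b" "F a"] unfolding a_def b_def by simp
qed

lemma in_basin_imp_preperiodic:
  assumes labels: "\<And>n. \<theta> n = piece ((f ^^ n) z)"
    and basin: "z \<in> basin av rh f z0 k" and "0 < k" and z0: "z0 \<in> Kset av rh f"
    and K: "\<And>x. x \<in> Kset av rh f \<Longrightarrow> av x < 1 \<or> av (x - 1) < 1"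
    and lip: "\<And>u v. av u \<le> 1 \<Longrightarrow> av v \<le> 1 \<Longrightarrow> av (f u - f v) \<le> L * av (u - v)"
    and "1 \<le> L"
  shows "preperiodic_seq \<theta>"
proof -
  have K1: "av x \<le> 1" if "x \<in> Kset av rh f" for x
    using K[OF that] av_ultra[of "x - 1" 1] by auto
  obtain m where "z \<in> Kset av rh f" and "conv_to av (\<lambda>n. (f ^^ (n * k + m)) z) z0"
    using basin unfolding basin_def by blast
  moreover have "0 < 1 / L ^ k" using \<open>1 \<le> L\<close> by simp
  ultimately obtain N where N: "\<forall>n\<ge>N. av ((f ^^ (n * k + m)) z - z0) < 1 / L ^ k"
    unfolding conv_to_def by blast
  have "\<theta> (n * k + m + j) = piece ((f ^^ j) z0)" if "N \<le> n" "j < k" for n j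
  proof -
    define x where "x = (f ^^ (n * k + m)) z"
    have x: "x \<in> Kset av rh f" using Kset_funpow \<open>z \<in> Kset av rh f\<close> by (simp add: x_def)
    have "L ^ j * av (x - z0) \<le> L ^ k * av (x - z0)"
      using \<open>1 \<le> L\<close> \<open>j < k\<close> by (intro mult_right_mono power_increasing) auto
    also have "\<dots> < 1"
      using N[rule_format, OF \<open>N \<le> n\<close>] \<open>1 \<le> L\<close> by (simp add: x_def field_simps)
    finally have "av ((f ^^ j) x - (f ^^ j) z0) < 1"
      using funpow_approx[of j f x f L 0 z0 "av (x - z0)"] lip \<open>1 \<le> L\<close> K1 Kset_funpow[OF x]
      by fastforce
    then have "piece ((f ^^ j) x) = piece ((f ^^ j) z0)"
      using piece_eq[OF K[OF Kset_funpow[OF z0]]] av_minus_commute by metis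
    then show ?thesis using labels[of "n * k + m + j"] by (simp add: x_def funpow_add_apply)
  qed
  then show ?thesis by (rule preperiodic_seqI_blocks[OF \<open>0 < k\<close>])
qed

lemma not_attracted_if_not_preperiodic:
  assumes labels: "\<And>z n. z \<in> D \<Longrightarrow> \<theta> n = piece ((f ^^ n) z)" and "\<not> preperiodic_seq \<theta>"
    and K: "\<And>x. x \<in> Kset av rh f \<Longrightarrow> av x < 1 \<or> av (x - 1) < 1"
    and lip: "\<And>u v. av u \<le> 1 \<Longrightarrow> av v \<le> 1 \<Longrightarrow> av (f u - f v) \<le> L * av (u - v)"
    and "1 \<le> L"
  shows "\<not> attracted av rh f D"
proof
  assume "attracted av rh f D"
  then obtain z z0 k where "z \<in> D" "z \<in> basin av rh f z0 k" "attracting_periodic av rh f z0 k"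
    unfolding attracted_def by blast
  then have "preperiodic_seq \<theta>"
    using in_basin_imp_preperiodic[OF labels _ _ _ K lip \<open>1 \<le> L\<close>]
    unfolding attracting_periodic_def by blast
  with assms(2) show False ..
qed

lemma root_in_unit_disc:
  assumes root: "(\<Sum>i\<le>d. c i * s ^ i) = 0" and "c d \<noteq> 0"
    and dominant: "\<And>i. i < d \<Longrightarrow> av (c i) \<le> av (c d)"
  shows "av s \<le> 1"
proof (rule ccontr)
  assume "\<not> av s \<le> 1"
  then have s: "1 < av s" by simp
  have top: "0 < av (c d) * av s ^ d" using \<open>c d \<noteq> 0\<close> s by (simp add: av_pos)
  have "av (\<Sum>i<d. c i * s ^ i) < av (c d * s ^ d)"
  proof (rule av_sum_less)
    fix i assume "i \<in> {..<d}"
    then have "av (c i) * av s ^ i \<le> av (c d) * av s ^ i" using dominant[of i] s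
      by (intro mult_right_mono) auto
    also have "\<dots> < av (c d) * av s ^ d" using \<open>i \<in> {..<d}\<close> s \<open>c d \<noteq> 0\<close>
      by (intro mult_strict_left_mono power_strict_increasing) (auto simp: av_pos)
    finally show "av (c i * s ^ i) < av (c d * s ^ d)" by (simp add: av_mult av_power)
  qed (use top in \<open>simp add: av_mult av_power\<close>)
  then have "av (c d * s ^ d + (\<Sum>i<d. c i * s ^ i)) = av (c d) * av s ^ d"
    by (simp add: av_add_dominant av_mult av_power)
  moreover have "c d * s ^ d + (\<Sum>i<d. c i * s ^ i) = 0"
    using root by (simp add: lessThan_Suc_atMost[symmetric] add.commute)
  ultimately show False using top by (metis av_0 less_irrefl)
qed

lemma av_poly_diff_0_less:
  assumes "av s \<le> 1" "\<And>i. 1 \<le> i \<Longrightarrow> av (coeff T i) < 1"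
  shows "av (poly T s - poly T 0) < 1"
proof (cases T)
  case (pCons a T')
  have "av (coeff T' i * s ^ i) < 1" for i
  proof -
    have "av (coeff T' i) * av s ^ i \<le> av (coeff T' i)"
      using assms(1) by (simp add: mult_left_le power_le_one)
    then show ?thesis using assms(2)[of "Suc i"] pCons by (simp add: av_mult av_power)
  qed
  then have "av (poly T' s) < 1"
    unfolding poly_altdef by (intro av_sum_less) auto
  moreover have "av s * av (poly T' s) \<le> av (poly T' s)"
    using assms(1) by (simp add: mult_left_le_one_le)
  ultimately show ?thesis using pCons by (simp add: av_mult)
qed

lemma last_maximal_coeff:
  fixes T :: "'a poly"
  obtains "\<And>i. 1 \<le> i \<Longrightarrow> av (coeff T i) < 1"
  | R d where "1 \<le> R" "1 \<le> d" "av (coeff T d) = R" "\<And>i. 1 \<le> i \<Longrightarrow> av (coeff T i) \<le> R"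
      "\<And>i. d < i \<Longrightarrow> av (coeff T i) < R"
proof (cases "\<forall>i\<ge>1. av (coeff T i) < 1")
  case False
  then obtain i0 where i0: "1 \<le> i0" "1 \<le> av (coeff T i0)" by (auto simp: not_less)
  define R where "R = Max ((\<lambda>i. av (coeff T i)) ` {1..degree T})"
  define d where "d = Max {i \<in> {1..degree T}. av (coeff T i) = R}"
  have "i0 \<le> degree T" using i0 by (intro le_degree) auto
  have R_ge_in: "av (coeff T i) \<le> R" if "i \<in> {1..degree T}" for i
    unfolding R_def using that by (intro Max_ge) auto
  then have "1 \<le> R" using i0 \<open>i0 \<le> degree T\<close> by force
  then have R_ge: "av (coeff T i) \<le> R" if "1 \<le> i" for i
    using that R_ge_in by (cases "i \<le> degree T") (auto simp: coeff_eq_0)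
  have "R \<in> (\<lambda>i. av (coeff T i)) ` {1..degree T}"
    unfolding R_def using i0 \<open>i0 \<le> degree T\<close> by (intro Max_in) auto
  then have d: "d \<in> {i \<in> {1..degree T}. av (coeff T i) = R}"
    unfolding d_def by (intro Max_in) auto
  have "av (coeff T i) < R" if "d < i" for i
  proof (rule ccontr)
    assume "\<not> av (coeff T i) < R"
    then have "av (coeff T i) = R" using R_ge[of i] that d by auto
    with \<open>1 \<le> R\<close> have "i \<in> {i \<in> {1..degree T}. av (coeff T i) = R}"
      using that d by (auto intro: le_degree)
    then have "i \<le> d" unfolding d_def by (intro Max_ge) auto
    with that show False by simp
  qed
  with that(2)[OF \<open>1 \<le> R\<close>, of d] d R_ge show thesis by auto
qed (use that(1) in auto)

end

section \<open>Complete and algebraically closed fields\<close>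

locale complete_nonarch_abs = nonarch_abs +
  assumes complete: "cauchy_av av s \<Longrightarrow> \<exists>L. conv_to av s L"
begin

lemma contraction_fixpoint:
  assumes maps: "\<And>z. av (z - a) \<le> r \<Longrightarrow> av (T z - a) \<le> r"
    and contr: "\<And>z w. av (z - a) \<le> r \<Longrightarrow> av (w - a) \<le> r \<Longrightarrow> av (T z - T w) \<le> c * av (z - w)"
    and "0 \<le> c" "c < 1" "0 \<le> r"
  shows "\<exists>x. av (x - a) \<le> r \<and> T x = x"
proof -
  define s where "s n = (T ^^ n) a" for n
  have s_in: "av (s n - a) \<le> r" for n
    by (induction n) (use assms in \<open>auto simp: s_def\<close>)
  have s_Suc: "s (Suc n) = T (s n)" for n by (simp add: s_def)
  have "av (s (Suc n) - s n) \<le> c ^ n * r" for n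
  proof (induction n)
    case 0 then show ?case using s_in[of 1] by (simp add: s_def)
  next
    case (Suc n)
    have "av (s (Suc (Suc n)) - s (Suc n)) \<le> c * av (s (Suc n) - s n)"
      unfolding s_Suc[of "Suc n"] s_Suc[of n] using contr s_in s_Suc by metis
    also have "\<dots> \<le> c * (c ^ n * r)" using Suc assms by (intro mult_left_mono) auto
    finally show ?case by simp
  qed
  then obtain L where L: "conv_to av s L" using complete ultra_cauchy assms by metis
  have L_in: "av (L - a) \<le> r" using conv_bound[OF L, of 0 a r] s_in by simp
  have "T L = L"
  proof (rule ccontr)
    assume "T L \<noteq> L"
    then have "0 < av (T L - L)" by (simp add: av_pos)
    then obtain N where N: "\<forall>n\<ge>N. av (s n - L) < av (T L - L)"
      using L unfolding conv_to_def by blast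
    have "av (T L - s (Suc N)) \<le> c * av (L - s N)"
      using contr[OF L_in s_in] s_Suc by simp
    also have "\<dots> \<le> av (L - s N)" using assms by (simp add: mult_left_le_one_le)
    also have "\<dots> < av (T L - L)" using N av_minus_commute by (metis order_refl)
    moreover have "av (s (Suc N) - L) < av (T L - L)" using N by simp
    ultimately show False using av_triangle[of "T L" L "s (Suc N)"] by linarith
  qed
  then show ?thesis using L_in by blast
qed

end

locale alg_closed_nonarch_abs = nonarch_abs +
  assumes alg_closed: "0 < degree (f :: 'a poly) \<Longrightarrow> \<exists>x. poly f x = 0"
begin

lemma exists_unit_far_from_1: "\<exists>e. av e = 1 \<and> av (e - 1) = 1"
proof (cases "av (2 :: 'a) = 1")
  case True
  then show ?thesis by (intro exI[of _ "-1"]) (simp add: diff_minus_eq_add[symmetric])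
next
  case False
  then have "av (2 :: 'a) < 1" using av_of_nat_le_1[of 2] by simp
  then have av3: "av (3 :: 'a) = 1" using av_add_dominant[of 2 1] by simp
  \<comment> \<open>A root of \<open>x\<^sup>2 + x + 1\<close> is a cube root of unity, and it is far from 1 because \<open>3\<close> is a unit.\<close>
  have "\<exists>w. poly [:1, 1, 1 :: 'a:] w = 0" by (rule alg_closed) simp
  then obtain w :: 'a where "poly [:1, 1, 1:] w = 0" ..
  then have w: "1 + (w + w ^ 2) = 0" by (simp add: power2_eq_square distrib_left)
  have "w ^ 3 = 1"
  proof -
    have "w ^ 3 - 1 = (w - 1) * (1 + (w + w ^ 2))" by (simp add: algebra_simps power2_eq_square power3_eq_cube)
    then show ?thesis using w by simp
  qed
  then have "av w ^ 3 = 1" by (metis av_1 av_power)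
  then have "av w = 1" using power_eq_iff_eq_base[of 3 "av w" 1] by simp
  moreover have "av (w - 1) = 1"
  proof (rule ccontr)
    assume "av (w - 1) \<noteq> 1"
    then have "av (w - 1) < 1" using av_diff_le[of w 1] \<open>av w = 1\<close> by simp
    define t where "t = w - 1"
    have "av t < 1" using \<open>av (w - 1) < 1\<close> by (simp add: t_def)
    then have "av (3 * t) < 1" "av (t ^ 2) < 1"
      using av3 by (simp_all add: av_mult av_power power_less_one_iff)
    then have "av (3 * t + t ^ 2) < 1"
      using av_ultra[of "3 * t" "t ^ 2"] by (meson le_less_trans max_less_iff_conj)
    moreover have "3 + (3 * t + t ^ 2) = 0"
      using w by (simp add: t_def algebra_simps power2_eq_square)
    ultimately show False using av_add_dominant[of "3 * t + t ^ 2" 3] av3 by simp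
  qed
  ultimately show ?thesis by blast
qed

text \<open>A root of the truncation of \<open>T - y\<close> at degree \<open>d\<close> lies in the unit disc, and \<open>T\<close> maps it
  \<open>R\<close>-close to \<open>y\<close>.\<close>
lemma poly_covers_disc:
  assumes "1 \<le> d" "av (coeff T d) = R" "0 < R"
    and bound: "\<And>i. 1 \<le> i \<Longrightarrow> av (coeff T i) \<le> R"
    and last: "\<And>i. d < i \<Longrightarrow> av (coeff T i) < R"
    and y: "av (poly T 0 - y) \<le> R"
  shows "\<exists>s. av s \<le> 1 \<and> av (poly T s - y) < R"
proof -
  define c where "c i = (if i = 0 then coeff T 0 - y else coeff T i)" for i
  have cd: "c d = coeff T d" "coeff T d \<noteq> 0" using assms by (auto simp: c_def)
  have "coeff (\<Sum>i\<le>d. monom (c i) i) d = c d" by (simp add: coeff_sum)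
  then have "0 < degree (\<Sum>i\<le>d. monom (c i) i)"
    using cd \<open>1 \<le> d\<close> le_degree[of "\<Sum>i\<le>d. monom (c i) i" d] by fastforce
  then obtain s where "poly (\<Sum>i\<le>d. monom (c i) i) s = 0" using alg_closed by blast
  then have root: "(\<Sum>i\<le>d. c i * s ^ i) = 0" by (simp add: poly_sum poly_monom)
  have s: "av s \<le> 1"
  proof (rule root_in_unit_disc[OF root])
    fix i assume "i < d"
    then show "av (c i) \<le> av (c d)"
      using y bound[of i] assms(2) cd by (simp add: c_def poly_0_coeff_0)
  qed (use cd in simp)
  define n where "n = degree T"
  have "d \<le> n" using cd le_degree by (simp add: n_def)
  have "c i * s ^ i = coeff T i * s ^ i - (if i = 0 then y else 0)" for i
    by (simp add: c_def left_diff_distrib)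
  then have "poly T s - y = (\<Sum>i\<le>n. c i * s ^ i)"
    by (simp add: poly_altdef n_def sum_subtractf)
  also have "\<dots> = (\<Sum>i\<le>d. c i * s ^ i) + (\<Sum>i\<in>{d<..n}. c i * s ^ i)"
    using \<open>d \<le> n\<close> by (subst ivl_disj_un_one(3)[symmetric]) (auto intro: sum.union_disjoint)
  finally have "poly T s - y = (\<Sum>i\<in>{d<..n}. coeff T i * s ^ i)"
    using root \<open>1 \<le> d\<close> by (simp add: c_def)
  moreover have "av (\<Sum>i\<in>{d<..n}. coeff T i * s ^ i) < R"
  proof (rule av_sum_less)
    fix i assume "i \<in> {d<..n}"
    then have "av (coeff T i) * av s ^ i \<le> av (coeff T i)" "av (coeff T i) < R"
      using s last by (auto simp: mult_left_le power_le_one)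
    then show "av (coeff T i * s ^ i) < R" by (simp add: av_mult av_power)
  qed (rule \<open>0 < R\<close>)
  ultimately show ?thesis using s by auto
qed

lemma exists_disc_avoiding_pieces:
  assumes "1 \<le> R" "av a \<le> 1" "av b = R"
  obtains y where "av (a - y) \<le> R" "\<And>x. av (x - y) < R \<Longrightarrow> 1 \<le> av x \<and> 1 \<le> av (x - 1)"
proof (cases "R = 1")
  case True
  obtain e where e: "av e = 1" "av (e - 1) = 1" using exists_unit_far_from_1 by blast
  show thesis
  proof (rule that[of e])
    show "av (a - e) \<le> R" using av_diff_le[of a e] assms e True by simp
    fix x assume "av (x - e) < R"
    then have "av (e + (x - e)) = 1" "av ((e - 1) + (x - e)) = 1"
      using av_add_dominant[of "x - e" e] av_add_dominant[of "x - e" "e - 1"] e True by simp_all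
    then show "1 \<le> av x \<and> 1 \<le> av (x - 1)" by simp
  qed
next
  case False
  show thesis
  proof (rule that[of b])
    show "av (a - b) \<le> R" using av_diff_le[of a b] assms by simp
    fix x assume "av (x - b) < R"
    then have "av (b + (x - b)) = R" using av_add_dominant[of "x - b" b] assms by simp
    moreover have "av (x - 1) = av x" if "1 < av x"
      using av_diff_dominant[of 1 x] that by simp
    ultimately show "1 \<le> av x \<and> 1 \<le> av (x - 1)" using assms False by simp
  qed
qed

lemma same_piece_if_poly_approx:
  assumes pieces: "\<And>s. av s \<le> 1 \<Longrightarrow> av (\<phi> s) < 1 \<or> av (\<phi> s - 1) < 1"
    and approx: "\<And>s. av s \<le> 1 \<Longrightarrow> av (\<phi> s - poly T s) < 1"
  shows "av (\<phi> 1 - \<phi> 0) < 1"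
proof (cases rule: last_maximal_coeff[of T])
  case 1
  then have "av (poly T 1 - poly T 0) < 1" by (intro av_poly_diff_0_less) auto
  moreover have "av (\<phi> 1 - poly T 1) < 1" "av (poly T 0 - \<phi> 0) < 1"
    using approx[of 1] approx[of 0] av_minus_commute[of "\<phi> 0"] by auto
  ultimately show ?thesis
    using av_triangle[of "\<phi> 1" "\<phi> 0" "poly T 1"] av_triangle[of "poly T 1" "\<phi> 0" "poly T 0"]
    by auto
next
  case (2 R d)
  have "av (\<phi> 0) \<le> 1" using pieces[of 0] av_ultra[of "\<phi> 0 - 1" 1] by auto
  then have "av (poly T 0) \<le> 1"
    using approx[of 0] av_ultra[of "poly T 0 - \<phi> 0" "\<phi> 0"] av_minus_commute[of "\<phi> 0"] by auto
  then obtain y where y: "av (poly T 0 - y) \<le> R"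
    and far: "\<And>x. av (x - y) < R \<Longrightarrow> 1 \<le> av x \<and> 1 \<le> av (x - 1)"
    using exists_disc_avoiding_pieces 2 by metis
  obtain s where s: "av s \<le> 1" "av (poly T s - y) < R"
    using poly_covers_disc[OF 2(2,3) _ 2(4,5) y] 2(1) by auto
  then have "av (\<phi> s - y) < R"
    using approx[OF s(1)] av_triangle[of "\<phi> s" y "poly T s"] 2(1) by auto
  then show ?thesis using far pieces[OF s(1)] by fastforce
qed

end

section \<open>Power series on \<open>B\<close>\<close>

locale small_series = nonarch_abs av for av :: "'a::field \<Rightarrow> real" +
  fixes rh :: real and q :: "nat \<Rightarrow> 'a"
  assumes rh_gt_1: "1 < rh" and rh_attained: "\<exists>x. x \<noteq> 0 \<and> av x = rh"
    and in_H: "in_H av rh q" and Bnorm_lt_1: "Bnorm av rh q < 1"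
begin

lemma ps_eval_conv:
  assumes "av u \<le> rh" shows "conv_to av (\<lambda>n. \<Sum>i<n. q i * u ^ i) (ps_eval av q u)"
  using in_H assms ps_eval_eqI unfolding in_H_def closed_disc_def by blast

lemma coeff_bound_tendsto_0:
  assumes "0 < e" shows "\<exists>N. \<forall>i\<ge>N. av (q i) * rh ^ i < e"
proof -
  obtain x where x: "av x = rh" using rh_attained by blast
  then obtain N where N: "\<forall>n\<ge>N. av ((\<Sum>i<n. q i * x ^ i) - ps_eval av q x) < e"
    using ps_eval_conv[of x] assms unfolding conv_to_def by auto
  have "av (q i) * rh ^ i < e" if "N \<le> i" for i
  proof -
    let ?A = "(\<Sum>j<Suc i. q j * x ^ j) - ps_eval av q x" and ?B = "(\<Sum>j<i. q j * x ^ j) - ps_eval av q x"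
    have "q i * x ^ i = ?A - ?B" by simp
    then have "av (q i * x ^ i) \<le> max (av ?A) (av ?B)" by (metis av_diff_le)
    moreover have "av ?A < e" "av ?B < e" using N that by (auto simp del: sum.lessThan_Suc)
    ultimately show ?thesis by (simp add: av_mult av_power x)
  qed
  then show ?thesis by blast
qed

lemma coeff_le_Bnorm: "av (q i) * rh ^ i \<le> Bnorm av rh q"
proof -
  obtain N where N: "\<forall>i\<ge>N. av (q i) * rh ^ i < 1" using coeff_bound_tendsto_0[of 1] by auto
  have "av (q i) * rh ^ i \<le> max 1 (Max ((\<lambda>i. av (q i) * rh ^ i) ` {..<N}))" for i
    using N by (cases "i < N") (auto simp: max.coboundedI1 max.coboundedI2 less_imp_le not_less)
  then have "bdd_above (range (\<lambda>i. av (q i) * rh ^ i))" by (intro bdd_aboveI2)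
  then show ?thesis unfolding Bnorm_def by (intro cSUP_upper) simp_all
qed

lemma ps_eval_tail:
  assumes u: "av u \<le> rh" and tail: "\<And>i. N \<le> i \<Longrightarrow> av (q i) * rh ^ i \<le> \<tau>" and "0 \<le> \<tau>"
  shows "av (ps_eval av q u - (\<Sum>i<N. q i * u ^ i)) \<le> \<tau>"
proof (rule conv_bound[OF ps_eval_conv[OF u], of N])
  fix n assume "N \<le> n"
  then have "(\<Sum>i<n. q i * u ^ i) - (\<Sum>i<N. q i * u ^ i) = (\<Sum>i\<in>{N..<n}. q i * u ^ i)"
    by (simp add: sum_diff_nat_ivl[of 0 N n, symmetric] atLeast0LessThan)
  also have "av \<dots> \<le> \<tau>"
  proof (rule av_sum_le)
    fix i assume "i \<in> {N..<n}"
    have "av (q i) * av u ^ i \<le> av (q i) * rh ^ i"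
      using u by (intro mult_left_mono power_mono) auto
    then have "av (q i) * av u ^ i \<le> \<tau>" using tail[of i] \<open>i \<in> {N..<n}\<close> by simp
    then show "av (q i * u ^ i) \<le> \<tau>" by (simp add: av_mult av_power)
  qed (rule \<open>0 \<le> \<tau>\<close>)
  finally show "av ((\<Sum>i<n. q i * u ^ i) - (\<Sum>i<N. q i * u ^ i)) \<le> \<tau>" .
qed

lemma ps_eval_lt_1:
  assumes "av u \<le> rh" shows "av (ps_eval av q u) < 1"
proof -
  have "0 \<le> Bnorm av rh q" using order_trans[OF _ coeff_le_Bnorm[of 0]] by simp
  then show ?thesis
    using ps_eval_tail[OF assms, of 0 "Bnorm av rh q"] coeff_le_Bnorm Bnorm_lt_1 by simp
qed

lemma partial_sum_lipschitz:
  assumes "av u \<le> rh" "av v \<le> rh"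
  shows "av ((\<Sum>i<N. q i * u ^ i) - (\<Sum>i<N. q i * v ^ i)) \<le> av (u - v)"
  unfolding sum_subtractf[symmetric]
proof (rule av_sum_le)
  fix i
  show "av (q i * u ^ i - q i * v ^ i) \<le> av (u - v)"
  proof (cases i)
    case (Suc m)
    have "av (q i) * rh ^ m \<le> av (q i) * rh ^ i"
      using Suc rh_gt_1 by (intro mult_left_mono power_increasing) auto
    then have qm: "av (q i) * rh ^ m \<le> 1" using coeff_le_Bnorm[of i] Bnorm_lt_1 by simp
    have "av (q i * u ^ i - q i * v ^ i) = av (q i) * av (u ^ Suc m - v ^ Suc m)"
      by (simp add: av_mult Suc right_diff_distrib[symmetric])
    also have "\<dots> \<le> av (q i) * (av (u - v) * rh ^ m)"
      using av_power_diff_le[OF assms] by (intro mult_left_mono) auto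
    also have "\<dots> \<le> av (u - v)"
      using qm by (simp add: mult.left_commute[of "av (q i)"] mult_left_le)
    finally show ?thesis .
  qed simp
qed simp

lemma ps_eval_lipschitz:
  assumes "av u \<le> rh" "av v \<le> rh"
  shows "av (ps_eval av q u - ps_eval av q v) \<le> av (u - v)"
  using conv_bound[OF conv_diff[OF ps_eval_conv[OF assms(1)] ps_eval_conv[OF assms(2)]], of 0 0]
    partial_sum_lipschitz[OF assms] by simp

end

section \<open>The maps \<open>Q\<^sub>\<lambda>\<close>\<close>

lemma poly_pcompose_funpow: "poly ((pcompose F ^^ n) T) x = (poly F ^^ n) (poly T x)"
  by (induction n) (simp_all add: poly_pcompose)

lemma Pmap_factored: "Pmap p lam z = z ^ p * (lam / of_nat p + (1 - lam / of_nat p) * z)"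
proof -
  define c where "c = lam / of_nat p"
  show ?thesis unfolding Pmap_def c_def[symmetric] by (simp add: algebra_simps)
qed

lemma Pmap_perturbation: "Pmap p lam z = z ^ (p + 1) - lam / of_nat p * z ^ p * (z - 1)"
proof -
  define c where "c = lam / of_nat p"
  show ?thesis unfolding Pmap_def c_def[symmetric] by (simp add: algebra_simps)
qed

lemma Pmap_linearization:
  fixes z w A B :: "'a::field"
  shows "(Pmap p lam z + A - z) - (Pmap p lam w + B - w) - (of_nat p - lam / of_nat p) * (z - w) =
     (z ^ (p + 1) - w ^ (p + 1) - (of_nat p + 1) * (z - w))
     - lam / of_nat p * ((z ^ p - w ^ p) * (z - 1) + (w ^ p - 1) * (z - w)) + (A - B)"
  by (simp add: Pmap_def algebra_simps diff_divide_distrib)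

locale Qlam_setting =
  complete_nonarch_abs av + alg_closed_nonarch_abs av + small_series av rh q
  for av :: "'a::field \<Rightarrow> real" and rh q +
  fixes p :: nat and lam :: 'a
  assumes p_ge_2: "2 \<le> p" and av_p: "av (of_nat p) = 1 / real p" and lam_near_1: "av (lam - 1) < 1"
begin

abbreviation "Q \<equiv> ps_eval av q"
abbreviation "Pm \<equiv> Pmap p lam"

lemma av_lam_div_p: "av (lam / of_nat p) = real p"
  using av_add_dominant[of "lam - 1" 1] lam_near_1 av_p p_ge_2 by (simp add: av_divide)

lemma av_1_minus_lam_div_p: "av (1 - lam / of_nat p) = real p"
  using av_diff_dominant[of 1 "lam / of_nat p"] av_lam_div_p p_ge_2 av_minus_commute[of 1]
  by simp

definition fix_rad :: real where
  "fix_rad = av (Q 1) / real p"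

definition beta :: 'a where
  "beta = of_nat p - lam / of_nat p"

lemma fix_rad_nonneg: "0 \<le> fix_rad"
  unfolding fix_rad_def by simp

lemma p_fix_rad_lt_1: "real p * fix_rad < 1"
  unfolding fix_rad_def using ps_eval_lt_1[of 1] rh_gt_1 p_ge_2 by simp

lemma fix_rad_lt_1: "fix_rad < 1"
  using mult_right_mono[of 1 "real p" fix_rad] fix_rad_nonneg p_ge_2 p_fix_rad_lt_1 by simp

lemma av_beta: "av beta = real p"
proof -
  have "av (of_nat p :: 'a) < av (- (lam / of_nat p))"
    using av_p av_lam_div_p p_ge_2 less_1_mult[of "real p" "real p"] by (simp add: divide_less_eq)
  then show ?thesis
    using av_add_dominant[of "of_nat p" "- (lam / of_nat p)"] av_lam_div_p
    by (simp add: beta_def add.commute)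
qed

lemma Qstar_linearization:
  assumes z: "av (z - 1) \<le> fix_rad" and w: "av (w - 1) \<le> fix_rad"
  shows "av ((Qstar av q p lam z - z) - (Qstar av q p lam w - w) - beta * (z - w)) \<le> av (z - w)"
proof -
  have z1: "av z \<le> 1" and w1: "av w \<le> 1"
    using z w fix_rad_lt_1 av_ultra[of "z - 1" 1] av_ultra[of "w - 1" 1] by auto
  have "av (z ^ (p + 1) - w ^ (p + 1)) \<le> av (z - w)" by (rule av_power_diff_le_1[OF z1 w1])
  moreover have "av ((of_nat p + 1) * (z - w)) \<le> av (z - w)"
    using av_of_nat_le_1[of "p + 1"] by (simp add: av_mult mult_left_le_one_le add.commute)
  ultimately have A: "av (z ^ (p + 1) - w ^ (p + 1) - (of_nat p + 1) * (z - w)) \<le> av (z - w)"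
    by (rule av_diff_bounded)
  have "av ((z ^ p - w ^ p) * (z - 1)) \<le> av (z - w) * fix_rad"
    "av ((w ^ p - 1) * (z - w)) \<le> av (z - w) * fix_rad"
    using av_power_diff_le_1[OF z1 w1, of p] av_power_diff_le_1[OF w1, of 1 p] z w
    by (auto simp: av_mult mult.commute[of _ "av (z - w)"] intro: mult_mono)
  then have "av ((z ^ p - w ^ p) * (z - 1) + (w ^ p - 1) * (z - w)) \<le> av (z - w) * fix_rad"
    by (rule av_add_bounded)
  then have "av (lam / of_nat p * ((z ^ p - w ^ p) * (z - 1) + (w ^ p - 1) * (z - w)))
      \<le> real p * (av (z - w) * fix_rad)"
    unfolding av_mult av_lam_div_p by (intro mult_left_mono) auto
  also have "\<dots> \<le> av (z - w)"
    using p_fix_rad_lt_1 mult_left_mono[of "real p * fix_rad" 1 "av (z - w)"] by (simp add: mult_ac)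
  finally have B: "av (lam / of_nat p * ((z ^ p - w ^ p) * (z - 1) + (w ^ p - 1) * (z - w))) \<le> av (z - w)" .
  have C: "av (Q z - Q w) \<le> av (z - w)" using ps_eval_lipschitz z1 w1 rh_gt_1 by simp
  show ?thesis
    unfolding Qstar_def beta_def Pmap_linearization
    by (rule av_add_bounded[OF av_diff_bounded[OF A B] C])
qed

definition newton :: "'a \<Rightarrow> 'a" where
  "newton z = z - (Qstar av q p lam z - z) / beta"

lemma newton_contraction:
  assumes "av (z - 1) \<le> fix_rad" "av (w - 1) \<le> fix_rad"
  shows "av (newton z - newton w) \<le> 1 / real p * av (z - w)"
proof -
  have "beta \<noteq> 0" using av_beta p_ge_2 by auto
  then have "newton z - newton w
      = - (((Qstar av q p lam z - z) - (Qstar av q p lam w - w) - beta * (z - w)) / beta)"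
    unfolding newton_def by (simp add: field_simps)
  then show ?thesis
    using Qstar_linearization[OF assms] p_ge_2 by (simp add: av_divide av_beta divide_right_mono)
qed

lemma newton_maps_disc:
  assumes "av (z - 1) \<le> fix_rad" shows "av (newton z - 1) \<le> fix_rad"
proof -
  have "newton 1 - 1 = - (Q 1 / beta)" by (simp add: newton_def Qstar_def Pmap_def)
  then have "av (newton 1 - 1) = fix_rad" by (simp add: av_divide av_beta fix_rad_def)
  moreover have "av (z - 1) / real p \<le> av (z - 1)"
    using p_ge_2 by (simp add: divide_le_eq mult_le_cancel_left1 not_less)
  then have "av (newton z - newton 1) \<le> fix_rad"
    using newton_contraction[OF assms, of 1] assms fix_rad_nonneg by simp
  ultimately show ?thesis using av_triangle[of "newton z" 1 "newton 1"] by simp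
qed

lemma Qstar_fixpoint_unique:
  assumes "av (z - 1) \<le> fix_rad" "Qstar av q p lam z = z" "av (w - 1) \<le> fix_rad" "Qstar av q p lam w = w"
  shows "z = w"
proof -
  have "real p * av (z - w) \<le> av (z - w)"
    using Qstar_linearization[OF assms(1,3)] assms(2,4) by (simp add: av_mult av_beta)
  moreover have "2 * av (z - w) \<le> real p * av (z - w)" using p_ge_2 by (intro mult_right_mono) auto
  ultimately have "av (z - w) = 0" using av_nonneg[of "z - w"] by linarith
  then show ?thesis by simp
qed

lemma hfix_near_1: "av (hfix av q p lam - 1) < 1"
proof -
  obtain h where h: "av (h - 1) \<le> fix_rad" "newton h = h"
    using contraction_fixpoint[of 1 fix_rad newton "1 / real p"]
      newton_maps_disc newton_contraction fix_rad_nonneg p_ge_2 by auto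
  have "beta \<noteq> 0" using av_beta p_ge_2 by auto
  then have "Qstar av q p lam h = h" using h(2) by (simp add: newton_def)
  then have "hfix av q p lam = h"
    unfolding hfix_def fix_rad_def[symmetric]
    using h(1) Qstar_fixpoint_unique by blast
  then show ?thesis using h(1) fix_rad_lt_1 by simp
qed

abbreviation "f \<equiv> Qlam av q p lam"
abbreviation "K \<equiv> Kset av rh f"

text \<open>\<open>Q\<^sub>\<lambda>\<close> is \<open>Q\<^sup>*\<^sub>\<lambda>\<close> conjugated by the translation \<open>z \<mapsto> z + \<delta>\<close>.\<close>
definition delta :: 'a where
  "delta = hfix av q p lam - 1"

definition shifted :: "('a \<Rightarrow> 'a) \<Rightarrow> 'a \<Rightarrow> 'a" where
  "shifted g x = Pm (x + delta) + g (x + delta) - delta"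

lemma av_delta: "av delta < 1"
  using hfix_near_1 by (simp add: delta_def)

lemma Qlam_eq_shifted: "f = shifted Q"
  by (auto simp: Qlam_def Let_def shifted_def delta_def algebra_simps)

lemma av_add_delta: "1 \<le> av z \<Longrightarrow> av (z + delta) = av z"
  using av_add_dominant[of delta z] av_delta by simp

lemma av_Qlam_minus_Pm:
  assumes "av z \<le> rh" shows "av (f z - Pm (z + delta)) < 1"
proof -
  have "av (z + delta) \<le> rh" using assms av_delta rh_gt_1 by (intro av_add_bounded) auto
  then show ?thesis
    using ps_eval_lt_1 av_delta by (simp add: Qlam_eq_shifted shifted_def av_diff_bounded_less)
qed

lemma av_Pm_outside:
  assumes "1 < av u" shows "av (Pm u) = real p * av u ^ (p + 1)"
proof -
  have "av (lam / of_nat p) < av ((1 - lam / of_nat p) * u)"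
    using assms p_ge_2 by (simp add: av_mult av_1_minus_lam_div_p av_lam_div_p)
  then have "av (lam / of_nat p + (1 - lam / of_nat p) * u) = real p * av u"
    using av_add_dominant by (metis add.commute av_mult av_1_minus_lam_div_p)
  moreover have "Pm u = u ^ p * (lam / of_nat p + (1 - lam / of_nat p) * u)"
    by (rule Pmap_factored)
  ultimately show ?thesis by (simp add: av_mult av_power)
qed

lemma av_Pm_unit:
  assumes "av u = 1" "av (u - 1) = 1" shows "av (Pm u) = real p"
proof -
  have "Pm u = u ^ (p + 1) - lam / of_nat p * u ^ p * (u - 1)"
    by (rule Pmap_perturbation)
  moreover have "av (lam / of_nat p * u ^ p * (u - 1)) = real p"
    unfolding av_mult av_power av_lam_div_p using assms by simp
  moreover have "av (u ^ (p + 1)) = 1" unfolding av_power using assms by simp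
  ultimately show ?thesis
    using av_diff_dominant[of "u ^ (p + 1)" "lam / of_nat p * u ^ p * (u - 1)"] p_ge_2
      av_minus_commute[of "u ^ (p + 1)"] by simp
qed

lemma Qlam_escapes:
  assumes "av z \<le> rh" "1 < av z" shows "real p * av z \<le> av (f z)"
proof -
  have u: "av (z + delta) = av z" using assms by (intro av_add_delta) auto
  have "real p * av z \<le> real p * av z ^ (p + 1)"
    using assms by (intro mult_left_mono) (auto simp: power_increasing[of 1 "p + 1" "av z", simplified])
  moreover have "1 < real p * av z" using assms p_ge_2 less_1_mult[of "real p" "av z"] by simp
  ultimately have big: "1 < av (Pm (z + delta))" and "real p * av z \<le> av (Pm (z + delta))"
    using av_Pm_outside u assms by auto
  moreover have "av (f z) = av (Pm (z + delta))"
    using av_add_dominant[of "f z - Pm (z + delta)" "Pm (z + delta)"] av_Qlam_minus_Pm[OF assms(1)] big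
    by simp
  ultimately show ?thesis by simp
qed

lemma Kset_in_unit_disc:
  assumes "z \<in> K" shows "av z \<le> 1"
proof (rule ccontr)
  assume "\<not> av z \<le> 1"
  have bound: "av ((f ^^ n) z) \<le> rh" for n using Kset_funpow[OF assms] by (simp add: Kset_def closed_disc_def)
  have grow: "real p ^ n * av z \<le> av ((f ^^ n) z)" for n
  proof (induction n)
    case (Suc n)
    have "av z \<le> real p ^ n * av z" using mult_right_mono[of 1 "real p ^ n" "av z"] p_ge_2 by simp
    then have "1 < av ((f ^^ n) z)" using Suc.IH \<open>\<not> av z \<le> 1\<close> by linarith
    then have "real p * av ((f ^^ n) z) \<le> av ((f ^^ Suc n) z)"
      using Qlam_escapes[OF bound] by simp
    moreover have "real p * (real p ^ n * av z) \<le> real p * av ((f ^^ n) z)"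
      using Suc by (intro mult_left_mono) auto
    ultimately show ?case by simp
  qed simp
  obtain n where "rh < real p ^ n" using real_arch_pow[of "real p" rh] p_ge_2 by auto
  moreover have "real p ^ n \<le> real p ^ n * av z"
    using \<open>\<not> av z \<le> 1\<close> mult_left_mono[of 1 "av z" "real p ^ n"] by simp
  ultimately show False using grow[of n] bound[of n] by linarith
qed

lemma Kset_in_pieces:
  assumes "z \<in> K" shows "av z < 1 \<or> av (z - 1) < 1"
proof (rule ccontr)
  assume "\<not> ?thesis"
  then have "av z = 1" "av (z - 1) = 1"
    using Kset_in_unit_disc[OF assms] av_diff_le[of z 1] by auto
  then have "av (Pm (z + delta)) = real p"
    using av_add_delta[of z] av_add_delta[of "z - 1"] by (intro av_Pm_unit) (simp_all add: algebra_simps)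
  moreover have "av (f z) \<le> 1"
    using Kset_in_unit_disc Kset_funpow[OF assms, of 1] by simp
  ultimately show False
    using av_Qlam_minus_Pm[of z] \<open>av z = 1\<close> rh_gt_1 p_ge_2 av_diff_le[of "f z" "f z - Pm (z + delta)"]
    by simp
qed

lemma Pm_lipschitz:
  assumes "av u \<le> 1" "av v \<le> 1" shows "av (Pm u - Pm v) \<le> real p * av (u - v)"
proof -
  have "Pm u - Pm v = lam / of_nat p * (u ^ p - v ^ p) + (1 - lam / of_nat p) * (u ^ (p + 1) - v ^ (p + 1))"
    by (simp add: Pmap_def algebra_simps)
  moreover have "av (lam / of_nat p * (u ^ p - v ^ p)) \<le> real p * av (u - v)"
    unfolding av_mult av_lam_div_p using av_power_diff_le_1[OF assms, of p] by (simp add: mult_left_mono)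
  moreover have "av ((1 - lam / of_nat p) * (u ^ (p + 1) - v ^ (p + 1))) \<le> real p * av (u - v)"
    unfolding av_mult av_1_minus_lam_div_p using av_power_diff_le_1[OF assms, of "p + 1"]
    by (simp add: mult_left_mono)
  ultimately show ?thesis by (simp add: av_add_bounded)
qed

lemma shifted_lipschitz:
  assumes g: "\<And>u v. av u \<le> rh \<Longrightarrow> av v \<le> rh \<Longrightarrow> av (g u - g v) \<le> av (u - v)"
    and "av x \<le> 1" "av y \<le> 1"
  shows "av (shifted g x - shifted g y) \<le> real p * av (x - y)"
proof -
  have u: "av (x + delta) \<le> 1" "av (y + delta) \<le> 1"
    using assms av_delta by (auto intro: av_add_bounded)
  have "av (g (x + delta) - g (y + delta)) \<le> 1 * av (x - y)"
    using g[of "x + delta" "y + delta"] u rh_gt_1 by simp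
  also have "\<dots> \<le> real p * av (x - y)" using p_ge_2 by (intro mult_right_mono) auto
  finally have "av (g (x + delta) - g (y + delta)) \<le> real p * av (x - y)" .
  moreover have "shifted g x - shifted g y
      = (Pm (x + delta) - Pm (y + delta)) + (g (x + delta) - g (y + delta))"
    by (simp add: shifted_def)
  ultimately show ?thesis using Pm_lipschitz[OF u] by (simp add: av_add_bounded)
qed

lemma Qlam_lipschitz: "av x \<le> 1 \<Longrightarrow> av y \<le> 1 \<Longrightarrow> av (f x - f y) \<le> real p * av (x - y)"
  unfolding Qlam_eq_shifted by (rule shifted_lipschitz[OF ps_eval_lipschitz])

definition trunc_poly :: "nat \<Rightarrow> 'a poly" where
  "trunc_poly N = pcompose (monom (lam / of_nat p) p + monom (1 - lam / of_nat p) (p + 1)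
      + (\<Sum>i<N. monom (q i) i)) [:delta, 1:] - [:delta:]"

lemma poly_trunc_poly: "poly (trunc_poly N) = shifted (\<lambda>u. \<Sum>i<N. q i * u ^ i)"
  by (auto simp: trunc_poly_def shifted_def Pmap_def poly_pcompose poly_monom poly_sum add.commute)

lemma trunc_poly_lipschitz:
  "av x \<le> 1 \<Longrightarrow> av y \<le> 1 \<Longrightarrow> av (poly (trunc_poly N) x - poly (trunc_poly N) y) \<le> real p * av (x - y)"
  unfolding poly_trunc_poly by (rule shifted_lipschitz[OF partial_sum_lipschitz])

lemma trunc_poly_approx:
  assumes "av x \<le> 1" "\<And>i. N \<le> i \<Longrightarrow> av (q i) * rh ^ i \<le> \<tau>" "0 \<le> \<tau>"
  shows "av (f x - poly (trunc_poly N) x) \<le> \<tau>"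
proof -
  have "av (x + delta) \<le> rh" using assms(1) av_delta rh_gt_1 by (intro av_add_bounded) auto
  then show ?thesis
    using ps_eval_tail[OF _ assms(2,3)] by (simp add: Qlam_eq_shifted poly_trunc_poly shifted_def)
qed

text \<open>The comparison polynomial is the \<open>n\<close>-th iterate of a truncation of \<open>Q\<^sub>\<lambda>\<close>, composed with the
  segment \<open>s \<mapsto> z + s (w - z)\<close>.\<close>
lemma Qlam_iterates_close_on_ball:
  assumes D: "is_ball av D" "D \<subseteq> K" and "z \<in> D" "w \<in> D"
  shows "av ((f ^^ n) w - (f ^^ n) z) < 1"
proof -
  define \<tau> where "\<tau> = 1 / (2 * real p ^ n)"
  have "0 < \<tau>" "real p ^ n * \<tau> < 1" using p_ge_2 by (simp_all add: \<tau>_def)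
  then obtain N where N: "\<And>i. N \<le> i \<Longrightarrow> av (q i) * rh ^ i \<le> \<tau>"
    using coeff_bound_tendsto_0 less_imp_le by meson
  define T where "T = (pcompose (trunc_poly N) ^^ n) [:z, w - z:]"
  have seg: "z + s * (w - z) \<in> K" if "av s \<le> 1" for s
    using is_ball_segment[OF D(1) \<open>z \<in> D\<close> \<open>w \<in> D\<close> that] D(2) by blast
  have "av ((f ^^ n) (z + s * (w - z)) - poly T s) < 1" if "av s \<le> 1" for s
  proof -
    have "av ((f ^^ n) (z + s * (w - z)) - (poly (trunc_poly N) ^^ n) (z + s * (w - z))) \<le> real p ^ n * \<tau>"
      using Kset_in_unit_disc Kset_funpow[OF seg[OF that]] trunc_poly_lipschitz
        trunc_poly_approx[OF _ N] \<open>0 < \<tau>\<close> \<open>real p ^ n * \<tau> < 1\<close> p_ge_2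
      by (intro funpow_approx[where \<tau> = \<tau>]) auto
    then show ?thesis using \<open>real p ^ n * \<tau> < 1\<close> by (simp add: T_def poly_pcompose_funpow)
  qed
  moreover have "av ((f ^^ n) (z + s * (w - z))) < 1 \<or> av ((f ^^ n) (z + s * (w - z)) - 1) < 1"
    if "av s \<le> 1" for s
    using Kset_in_pieces Kset_funpow seg[OF that] by blast
  ultimately show ?thesis
    using same_piece_if_poly_approx[of "\<lambda>s. (f ^^ n) (z + s * (w - z))" T] by simp
qed

lemma ball_same_piece:
  assumes "is_ball av D" "D \<subseteq> K" "z \<in> D" "w \<in> D"
  shows "piece ((f ^^ n) w) = piece ((f ^^ n) z)"
proof -
  have "(f ^^ n) w \<in> K" using Kset_funpow assms(2,4) by blast
  then show ?thesis
    by (rule sym[OF piece_eq[OF Kset_in_pieces Qlam_iterates_close_on_ball[OF assms]]])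
qed

end

lemma rho_lt_1: "2 \<le> p \<Longrightarrow> rho p < 1"
  unfolding rho_def by (simp add: powr_less_one divide_neg_pos)

theorem lemma3p8:
  fixes av :: "'a::field_char_0 \<Rightarrow> real" and p :: nat and rh :: real
    and q :: "nat \<Rightarrow> 'a" and lam :: 'a and D :: "'a set"
  assumes "is_Cp av p"
    and "1 < rh" and "\<exists>x. x \<noteq> 0 \<and> av x = rh"
    and "in_H av rh q" and "Bnorm av rh q < rho p"
    and "av (lam - 1) < 1"
    and "is_ball av D" and "D \<subseteq> Kset av rh (Qlam av q p lam)"
  shows "\<exists>\<theta>. (\<forall>z\<in>D. itinerary av (Qlam av q p lam) z \<theta>) \<and>
           (\<not> preperiodic_seq \<theta> \<longrightarrow>
              wandering (Qlam av q p lam) D \<and> \<not> attracted av rh (Qlam av q p lam) D)"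
proof -
  have "2 \<le> p" using assms(1) prime_ge_2_nat unfolding is_Cp_def by blast
  interpret Qlam_setting av rh q p lam
    using assms(1-6) rho_lt_1[OF \<open>2 \<le> p\<close>] \<open>2 \<le> p\<close> unfolding is_Cp_def
    by unfold_locales auto
  obtain c where "c \<in> D" using is_ball_nonempty[OF assms(7)] .
  define \<theta> where "\<theta> n = piece ((f ^^ n) c)" for n
  have labels: "\<theta> n = piece ((f ^^ n) z)" if "z \<in> D" for z n
    unfolding \<theta>_def using ball_same_piece[OF assms(7,8) that \<open>c \<in> D\<close>] .
  have "itinerary av f z \<theta>" if "z \<in> D" for z
    using itinerary_piece[OF labels[OF that]] Kset_in_pieces Kset_funpow that assms(8) by blast
  moreover have "wandering f D \<and> \<not> attracted av rh f D" if "\<not> preperiodic_seq \<theta>"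
    using wandering_if_not_preperiodic[where lab = piece, OF labels that]
      not_attracted_if_not_preperiodic[OF labels that Kset_in_pieces Qlam_lipschitz] p_ge_2 by simp
  ultimately show ?thesis by blast
qed

end
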